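(* Let $G$ be a $\lambda$-graph and $Q$ a query over $G$. Then $Q^{\#}$ is a sharing equivalence if and only if there exists a sharing equivalence on the nodes of $G$ containing $Q$.
   Context: A pre-$\lambda$-graph is a directed graph whose nodes are of four kinds: an application node $@(n_1,n_2)$ has exactly two children, its left child $n_1$ and its right child $n_2$; an abstraction node $\lambda(n)$ has exactly one child, its body $n$; a free variable node has no children and carries an atom $\mathrm{id}(n)$ from a fixed set of atoms, distinct free variable nodes carrying distinct atoms; a bound variable node $\mathrm{var}(l)$ has exactly one outgoing binding edge, to an abstraction node $l$ (its binder). A trace is a finite sequence of directions from $\{\swarrow,\downarrow,\searrow\}$; $\epsilon$ is the empty trace and $d\cdot\tau$ is the trace $\tau$ extended by one final step $d$. Paths $n\xrightarrow{\tau}m$ are defined inductively: $n\xrightarrow{\epsilon}n$; if $n\xrightarrow{\tau}\lambda(m)$ then $n\xrightarrow{\downarrow\cdot\tau}m$; if $n\xrightarrow{\tau}@(m_1,m_2)$ then $n\xrightarrow{\swarrow\cdot\tau}m_1$ and $n\xrightarrow{\searrow\cdot\tau}m_2$ (binding edges are never followed). The path $n\xrightarrow{\tau}$ crosses a node $m$ if either $n\xrightarrow{\tau}m$, or $\tau=d\cdot\tau'$ and $n\xrightarrow{\tau'}$ crosses $m$. A root is a node $r$ such that the only path ending in $r$ has the empty trace. A node $m$ dominates $n$ if every path from a root to $n$ crosses $m$. A $\lambda$-graph is a pre-$\lambda$-graph that has finitely many nodes, is acyclic ($n\xrightarrow{\tau}n$ holds only for $\tau=\epsilon$), and is dominated (every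 bound variable node $\mathrm{var}(l)$ is dominated by its binder $l$). Two nodes are homogeneous if both are application nodes, or both abstraction nodes, or both free variable nodes, or both bound variable nodes; a binary relation $R$ on nodes is homogeneous if it only relates homogeneous nodes. Rules: $(\swarrow)$: $@(n_1,n_2)\,R\,@(m_1,m_2)$ implies $n_1\,R\,m_1$; $(\searrow)$: $@(n_1,n_2)\,R\,@(m_1,m_2)$ implies $n_2\,R\,m_2$; $(\downarrow)$: $\lambda(n)\,R\,\lambda(m)$ implies $n\,R\,m$; $(\circlearrowright)$: $\mathrm{var}(n)\,R\,\mathrm{var}(m)$ implies $n\,R\,m$. $R$ is propagated if closed under $(\swarrow),(\downarrow),(\searrow)$. $R$ is open if $n\,R\,m$ implies $n=m$ for all free variable nodes $n,m$. A bisimulation is a homogeneous propagated relation closed also under $(\circlearrowright)$. A sharing equivalence is an open bisimulation that is an equivalence relation. $R^{\#}$ (spreading) is the smallest propagated equivalence relation containing $R$. A query over $G$ is a binary relation on the roots of $G$. *)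

theory Defs
  imports Main
begin

text \<open>Node labels: application with left and right child, abstraction with body,
  free variable carrying an atom, bound variable with its binding edge to a binder.\<close>
datatype ('n, 'a) node = App 'n 'n | Abs 'n | FVar 'a | BVar 'n

record ('n, 'a) pregraph =
  nodes :: "'n set"
  lab   :: "'n \<Rightarrow> ('n, 'a) node"

definition pre_lambda_graph :: "('n, 'a) pregraph \<Rightarrow> bool" where
  "pre_lambda_graph G \<longleftrightarrow>
     (\<forall>n\<in>nodes G. \<forall>n1 n2. lab G n = App n1 n2 \<longrightarrow> n1 \<in> nodes G \<and> n2 \<in> nodes G) \<and>
     (\<forall>n\<in>nodes G. \<forall>b. lab G n = Abs b \<longrightarrow> b \<in> nodes G) \<and>
     (\<forall>n\<in>nodes G. \<forall>l. lab G n = BVar l \<longrightarrow> l \<in> nodes G \<and> (\<exists>b. lab G l = Abs b)) \<and>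
     (\<forall>n\<in>nodes G. \<forall>m\<in>nodes G. \<forall>a. lab G n = FVar a \<and> lab G m = FVar a \<longrightarrow> n = m)"

datatype dir = DL | DD | DR  \<comment> \<open>left child, abstraction body, right child\<close>

text \<open>Traces are lists; the trace \<open>d \<cdot> \<tau>\<close> (\<open>\<tau>\<close> extended by a final step d) is \<open>d # \<tau>\<close>.\<close>
inductive path :: "('n, 'a) pregraph \<Rightarrow> 'n \<Rightarrow> dir list \<Rightarrow> 'n \<Rightarrow> bool" for G where
  path_nil: "n \<in> nodes G \<Longrightarrow> path G n [] n"
| path_abs: "path G n \<tau> l \<Longrightarrow> lab G l = Abs m \<Longrightarrow> path G n (DD # \<tau>) m"
| path_appl: "path G n \<tau> a \<Longrightarrow> lab G a = App m1 m2 \<Longrightarrow> path G n (DL # \<tau>) m1"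
| path_appr: "path G n \<tau> a \<Longrightarrow> lab G a = App m1 m2 \<Longrightarrow> path G n (DR # \<tau>) m2"

fun crosses :: "('n, 'a) pregraph \<Rightarrow> 'n \<Rightarrow> dir list \<Rightarrow> 'n \<Rightarrow> bool" where
  "crosses G n [] m = path G n [] m"
| "crosses G n (d # \<tau>) m = (path G n (d # \<tau>) m \<or> crosses G n \<tau> m)"

definition is_root :: "('n, 'a) pregraph \<Rightarrow> 'n \<Rightarrow> bool" where
  "is_root G r \<longleftrightarrow> r \<in> nodes G \<and> (\<forall>n \<tau>. path G n \<tau> r \<longrightarrow> \<tau> = [])"

definition dominates :: "('n, 'a) pregraph \<Rightarrow> 'n \<Rightarrow> 'n \<Rightarrow> bool" where
  "dominates G m n \<longleftrightarrow> (\<forall>r \<tau>. is_root G r \<and> path G r \<tau> n \<longrightarrow> crosses G r \<tau> m)"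

definition lambda_graph :: "('n, 'a) pregraph \<Rightarrow> bool" where
  "lambda_graph G \<longleftrightarrow> pre_lambda_graph G \<and> finite (nodes G) \<and>
     (\<forall>n \<tau>. path G n \<tau> n \<longrightarrow> \<tau> = []) \<and>
     (\<forall>n\<in>nodes G. \<forall>l. lab G n = BVar l \<longrightarrow> dominates G l n)"

fun homogeneous_nodes :: "('n, 'a) node \<Rightarrow> ('n, 'a) node \<Rightarrow> bool" where
  "homogeneous_nodes (App _ _) (App _ _) = True"
| "homogeneous_nodes (Abs _) (Abs _) = True"
| "homogeneous_nodes (FVar _) (FVar _) = True"
| "homogeneous_nodes (BVar _) (BVar _) = True"
| "homogeneous_nodes _ _ = False"

definition homogeneous :: "('n, 'a) pregraph \<Rightarrow> ('n \<times> 'n) set \<Rightarrow> bool" where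
  "homogeneous G R \<longleftrightarrow> (\<forall>(n, m)\<in>R. homogeneous_nodes (lab G n) (lab G m))"

definition propagated :: "('n, 'a) pregraph \<Rightarrow> ('n \<times> 'n) set \<Rightarrow> bool" where
  "propagated G R \<longleftrightarrow>
     (\<forall>n m n1 n2 m1 m2. (n, m) \<in> R \<and> lab G n = App n1 n2 \<and> lab G m = App m1 m2
        \<longrightarrow> (n1, m1) \<in> R \<and> (n2, m2) \<in> R) \<and>
     (\<forall>n m n' m'. (n, m) \<in> R \<and> lab G n = Abs n' \<and> lab G m = Abs m' \<longrightarrow> (n', m') \<in> R)"

definition closed_binders :: "('n, 'a) pregraph \<Rightarrow> ('n \<times> 'n) set \<Rightarrow> bool" where
  "closed_binders G R \<longleftrightarrow>
     (\<forall>n m l l'. (n, m) \<in> R \<and> lab G n = BVar l \<and> lab G m = BVar l' \<longrightarrow> (l, l') \<in> R)"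

definition open_rel :: "('n, 'a) pregraph \<Rightarrow> ('n \<times> 'n) set \<Rightarrow> bool" where
  "open_rel G R \<longleftrightarrow> (\<forall>n m a b. (n, m) \<in> R \<and> lab G n = FVar a \<and> lab G m = FVar b \<longrightarrow> n = m)"

definition bisimulation :: "('n, 'a) pregraph \<Rightarrow> ('n \<times> 'n) set \<Rightarrow> bool" where
  "bisimulation G R \<longleftrightarrow> homogeneous G R \<and> propagated G R \<and> closed_binders G R"

definition sharing_equivalence :: "('n, 'a) pregraph \<Rightarrow> ('n \<times> 'n) set \<Rightarrow> bool" where
  "sharing_equivalence G R \<longleftrightarrow> open_rel G R \<and> bisimulation G R \<and> equiv (nodes G) R"

inductive_set spread :: "('n, 'a) pregraph \<Rightarrow> ('n \<times> 'n) set \<Rightarrow> ('n \<times> 'n) set"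
  for G R where
  sp_base: "(n, m) \<in> R \<Longrightarrow> (n, m) \<in> spread G R"
| sp_refl: "n \<in> nodes G \<Longrightarrow> (n, n) \<in> spread G R"
| sp_sym: "(n, m) \<in> spread G R \<Longrightarrow> (m, n) \<in> spread G R"
| sp_trans: "(n, m) \<in> spread G R \<Longrightarrow> (m, k) \<in> spread G R \<Longrightarrow> (n, k) \<in> spread G R"
| sp_left: "(n, m) \<in> spread G R \<Longrightarrow> lab G n = App n1 n2 \<Longrightarrow> lab G m = App m1 m2
            \<Longrightarrow> (n1, m1) \<in> spread G R"
| sp_right: "(n, m) \<in> spread G R \<Longrightarrow> lab G n = App n1 n2 \<Longrightarrow> lab G m = App m1 m2
            \<Longrightarrow> (n2, m2) \<in> spread G R"
| sp_down: "(n, m) \<in> spread G R \<Longrightarrow> lab G n = Abs n' \<Longrightarrow> lab G m = Abs m'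
            \<Longrightarrow> (n', m') \<in> spread G R"

definition query :: "('n, 'a) pregraph \<Rightarrow> ('n \<times> 'n) set \<Rightarrow> bool" where
  "query G Q \<longleftrightarrow> (\<forall>(r, s)\<in>Q. is_root G r \<and> is_root G s)"

end

theory Submission
  imports Defs "HOL-Library.Sublist"
begin

text \<open>If \<open>Q \<subseteq> R\<close> for a sharing equivalence \<open>R\<close>, then \<open>Q\<^sup># \<subseteq> R\<close> by minimality, so
  \<open>Q\<^sup>#\<close> inherits openness and homogeneity from \<open>R\<close>; the real work is closure under binders.
  \<open>Q\<^sup>#\<close> lies in the equivalence closure of the relation pairing the nodes reached by one trace
  from the two roots of a query pair, so consider two bound variables reached that way.
  Domination puts their binders \<open>l\<close>, \<open>l'\<close> on the two root paths, at suffixes of the common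
  trace. Were these suffixes of different length, the longer one, followed from the other root,
  would reach a node strictly below its binder yet \<open>R\<close>-related to it, which is impossible in a
  finite acyclic graph: simulating the path along \<open>R\<close> would descend forever. So \<open>l\<close> and \<open>l'\<close>
  are themselves reached by a common trace and are related by \<open>Q\<^sup>#\<close>.\<close>

lemma lambda_graph_pre: "lambda_graph G \<Longrightarrow> pre_lambda_graph G"
  by (simp add: lambda_graph_def)

lemma binder_node: "pre_lambda_graph G \<Longrightarrow> n \<in> nodes G \<Longrightarrow> lab G n = BVar l \<Longrightarrow> l \<in> nodes G"
  unfolding pre_lambda_graph_def by blast

lemma path_source_node: "path G x t y \<Longrightarrow> x \<in> nodes G"
  by (induction rule: path.induct) auto

lemma path_target_node:
  assumes "pre_lambda_graph G" and "path G x t y"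
  shows "y \<in> nodes G"
  using assms(2)
proof induction
  case (path_abs n \<tau> l m)
  then show ?case using assms(1) unfolding pre_lambda_graph_def by blast
next
  case (path_appl n \<tau> a m1 m2)
  then show ?case using assms(1) unfolding pre_lambda_graph_def by blast
next
  case (path_appr n \<tau> a m1 m2)
  then show ?case using assms(1) unfolding pre_lambda_graph_def by blast
qed

lemma path_Nil_target: "path G x [] y \<Longrightarrow> y = x"
  by (cases rule: path.cases) auto

lemma path_deterministic: "path G x t y \<Longrightarrow> path G x t y' \<Longrightarrow> y' = y"
proof (induction arbitrary: y' rule: path.induct)
  case path_nil then show ?case by (simp add: path_Nil_target)
next
  case (path_abs n \<tau> l m)
  from path_abs.prems show ?case by cases (use path_abs.IH path_abs.hyps in fastforce)+
next
  case (path_appl n \<tau> a m1 m2)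
  from path_appl.prems show ?case by cases (use path_appl.IH path_appl.hyps in fastforce)+
next
  case (path_appr n \<tau> a m1 m2)
  from path_appr.prems show ?case by cases (use path_appr.IH path_appr.hyps in fastforce)+
qed

lemma path_append: "path G y r z \<Longrightarrow> path G x s y \<Longrightarrow> path G x (r @ s) z"
  by (induction rule: path.induct) (auto intro: path.intros)

lemma path_append_split:
  assumes "pre_lambda_graph G" and "path G x (r @ s) z"
  shows "\<exists>y. path G x s y \<and> path G y r z"
  using assms(2)
proof (induction r arbitrary: z)
  case Nil
  then have "z \<in> nodes G" using path_target_node[OF assms(1)] by simp
  with Nil show ?case by (auto intro: path_nil)
next
  case (Cons d r)
  from Cons.prems show ?case
  proof cases
    case path_nil
    then show ?thesis by simp
  next
    case (path_abs \<tau> l)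
    then obtain y where "path G x s y" "path G y r l" using Cons.IH by auto
    then show ?thesis using path_abs by (auto intro: path.path_abs)
  next
    case (path_appl \<tau> a m2)
    then obtain y where "path G x s y" "path G y r a" using Cons.IH by auto
    then show ?thesis using path_appl by (auto intro: path.path_appl)
  next
    case (path_appr \<tau> a m1)
    then obtain y where "path G x s y" "path G y r a" using Cons.IH by auto
    then show ?thesis using path_appr by (auto intro: path.path_appr)
  qed
qed

lemma crosses_suffix_path: "crosses G r t l \<Longrightarrow> \<exists>t'. suffix t' t \<and> path G r t' l"
proof (induction t)
  case Nil
  then show ?case by (intro exI[of _ "[]"]) simp
next
  case (Cons d t)
  then consider "path G r (d # t) l" | "crosses G r t l" by (auto simp only: crosses.simps)
  then show ?case
  proof cases
    case 1 then show ?thesis using suffix_order.refl by blast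
  next
    case 2
    then obtain t' where "suffix t' t" "path G r t' l" using Cons.IH by blast
    then show ?thesis by (blast intro: suffix_ConsI)
  qed
qed

text \<open>\<open>(y, x) \<in> strictly_below G\<close>: \<open>y\<close> is a proper descendant of \<open>x\<close>; the pair is oriented
  so that well-foundedness allows induction downwards.\<close>
definition strictly_below :: "('n, 'a) pregraph \<Rightarrow> ('n \<times> 'n) set" where
  "strictly_below G = {(y, x). \<exists>d. d \<noteq> [] \<and> path G x d y}"

lemma wf_strictly_below:
  assumes "pre_lambda_graph G" and "finite (nodes G)" and "\<forall>n \<tau>. path G n \<tau> n \<longrightarrow> \<tau> = []"
  shows "wf (strictly_below G)"
proof (rule finite_acyclic_wf)
  have "strictly_below G \<subseteq> nodes G \<times> nodes G"
    unfolding strictly_below_def by (auto dest: path_source_node path_target_node[OF assms(1)])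
  then show "finite (strictly_below G)"
    using finite_cartesian_product[OF assms(2) assms(2)] by (rule finite_subset)
  have "trans (strictly_below G)"
  proof (rule transI)
    fix x y z assume "(x, y) \<in> strictly_below G" "(y, z) \<in> strictly_below G"
    then obtain d e where "d \<noteq> []" "path G y d x" "path G z e y"
      unfolding strictly_below_def by blast
    then have "d @ e \<noteq> []" "path G z (d @ e) x" by (simp_all add: path_append)
    then show "(x, z) \<in> strictly_below G" unfolding strictly_below_def by blast
  qed
  moreover have "(x, x) \<notin> strictly_below G" for x
    unfolding strictly_below_def using assms(3) by blast
  ultimately show "acyclic (strictly_below G)"
    by (simp add: acyclic_def trancl_id)
qed

lemma homogeneousD: "homogeneous G R \<Longrightarrow> (x, y) \<in> R \<Longrightarrow> homogeneous_nodes (lab G x) (lab G y)"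
  unfolding homogeneous_def by blast

lemma homogeneous_subset: "S \<subseteq> R \<Longrightarrow> homogeneous G R \<Longrightarrow> homogeneous G S"
  unfolding homogeneous_def by blast

lemma open_rel_subset: "S \<subseteq> R \<Longrightarrow> open_rel G R \<Longrightarrow> open_rel G S"
  unfolding open_rel_def by blast

lemma query_subset_nodes: "query G Q \<Longrightarrow> Q \<subseteq> nodes G \<times> nodes G"
  unfolding query_def is_root_def by fast

lemma path_simulation:
  assumes "homogeneous G R" and "propagated G R"
  shows "path G x t x' \<Longrightarrow> (x, y) \<in> R \<Longrightarrow> y \<in> nodes G \<Longrightarrow> \<exists>y'. path G y t y' \<and> (x', y') \<in> R"
proof (induction rule: path.induct)
  case (path_nil n)
  then show ?case by (auto intro: path.path_nil)
next
  case (path_abs n \<tau> l m)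
  then obtain y1 where y1: "path G y \<tau> y1" "(l, y1) \<in> R" by blast
  with path_abs.hyps(2) obtain b where "lab G y1 = Abs b"
    using homogeneousD[OF assms(1)] by (cases "lab G y1") fastforce+
  with y1 path_abs.hyps(2) assms(2) show ?case
    unfolding propagated_def by (blast intro: path.path_abs)
next
  case (path_appl n \<tau> a m1 m2)
  then obtain y1 where y1: "path G y \<tau> y1" "(a, y1) \<in> R" by blast
  with path_appl.hyps(2) obtain b1 b2 where "lab G y1 = App b1 b2"
    using homogeneousD[OF assms(1)] by (cases "lab G y1") fastforce+
  with y1 path_appl.hyps(2) assms(2) show ?case
    unfolding propagated_def by (blast intro: path.path_appl)
next
  case (path_appr n \<tau> a m1 m2)
  then obtain y1 where y1: "path G y \<tau> y1" "(a, y1) \<in> R" by blast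
  with path_appr.hyps(2) obtain b1 b2 where "lab G y1 = App b1 b2"
    using homogeneousD[OF assms(1)] by (cases "lab G y1") fastforce+
  with y1 path_appr.hyps(2) assms(2) show ?case
    unfolding propagated_def by (blast intro: path.path_appr)
qed

lemma propagated_not_related_below:
  assumes "pre_lambda_graph G" and "wf (strictly_below G)"
    and "homogeneous G R" and "propagated G R"
  shows "(y, x) \<in> strictly_below G \<Longrightarrow> (x, y) \<notin> R"
proof (induction x arbitrary: y rule: wf_induct_rule[OF assms(2)])
  case (1 x)
  then obtain d where d: "d \<noteq> []" "path G x d y"
    unfolding strictly_below_def by blast
  show ?case
  proof
    assume "(x, y) \<in> R"
    moreover have "y \<in> nodes G" using path_target_node[OF assms(1) d(2)] .
    ultimately obtain z where "path G y d z" "(y, z) \<in> R"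
      using path_simulation[OF assms(3,4) d(2)] by blast
    with d(1) have "(z, y) \<in> strictly_below G" "(y, z) \<in> R"
      unfolding strictly_below_def by blast+
    with "1.IH" "1.prems" show False by blast
  qed
qed

lemma binder_on_root_path:
  assumes "lambda_graph G" and "is_root G r" and "path G r t n" and "lab G n = BVar l"
  shows "\<exists>t'. suffix t' t \<and> path G r t' l"
proof -
  have "n \<in> nodes G" using lambda_graph_pre[OF assms(1)] assms(3) by (rule path_target_node)
  with assms(1,4) have "dominates G l n"
    by (simp add: lambda_graph_def)
  with assms(2,3) have "crosses G r t l"
    unfolding dominates_def by simp
  then show ?thesis by (rule crosses_suffix_path)
qed

lemma bisimulation_binder_suffix_eq_of_suffix:
  assumes G: "lambda_graph G" and R: "bisimulation G R" "sym R" "trans R"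
    and "(r, s) \<in> R" and "path G r t n" and "path G s t m"
    and "lab G n = BVar l" and "lab G m = BVar l'"
    and "path G r t1 l" and "suffix t2 t" and "path G s t2 l'" and "suffix t1 t2"
  shows "t1 = t2"
proof (rule ccontr)
  txt \<open>Otherwise the node \<open>p\<close> at \<open>t2\<close> from \<open>r\<close> lies strictly below \<open>l\<close>, yet \<open>p R l' R l\<close>.\<close>
  assume "t1 \<noteq> t2"
  have pre: "pre_lambda_graph G" using G by (rule lambda_graph_pre)
  have wf: "wf (strictly_below G)"
    using G unfolding lambda_graph_def by (intro wf_strictly_below) simp_all
  have homR: "homogeneous G R" and propR: "propagated G R" and bindR: "closed_binders G R"
    using R(1) unfolding bisimulation_def by blast+
  from \<open>suffix t1 t2\<close> obtain d where t2: "t2 = d @ t1" by (rule suffixE)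
  with \<open>t1 \<noteq> t2\<close> have "d \<noteq> []" by simp
  from \<open>suffix t2 t\<close> obtain e where "t = e @ t2" by (rule suffixE)
  then obtain p where "path G r t2 p"
    using path_append_split[OF pre] \<open>path G r t n\<close> by blast
  then obtain q where "path G r t1 q" "path G q d p"
    using path_append_split[OF pre] t2 by blast
  with \<open>path G r t1 l\<close> have "path G l d p" using path_deterministic by metis
  with \<open>d \<noteq> []\<close> have below: "(p, l) \<in> strictly_below G"
    unfolding strictly_below_def by blast
  have "s \<in> nodes G" using path_source_node \<open>path G s t2 l'\<close> .
  then obtain p' where "path G s t2 p'" "(p, p') \<in> R"
    using path_simulation[OF homR propR \<open>path G r t2 p\<close> \<open>(r, s) \<in> R\<close>] by blast
  with \<open>path G s t2 l'\<close> have "(p, l') \<in> R" using path_deterministic by metis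
  obtain m' where "path G s t m'" "(n, m') \<in> R"
    using path_simulation[OF homR propR \<open>path G r t n\<close> \<open>(r, s) \<in> R\<close> \<open>s \<in> nodes G\<close>] by blast
  with \<open>path G s t m\<close> have "(n, m) \<in> R" using path_deterministic by metis
  with bindR \<open>lab G n = BVar l\<close> \<open>lab G m = BVar l'\<close> have "(l, l') \<in> R"
    unfolding closed_binders_def by blast
  with \<open>(p, l') \<in> R\<close> R(2,3) have "(l, p) \<in> R" by (meson symD transD)
  with below show False using propagated_not_related_below[OF pre wf homR propR] by blast
qed

lemma bisimulation_binder_suffix_eq:
  assumes G: "lambda_graph G" and R: "bisimulation G R" "sym R" "trans R"
    and "(r, s) \<in> R" and "path G r t n" and "path G s t m"
    and "lab G n = BVar l" and "lab G m = BVar l'"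
    and "suffix t1 t" and "path G r t1 l" and "suffix t2 t" and "path G s t2 l'"
  shows "t1 = t2"
proof -
  from \<open>suffix t1 t\<close> \<open>suffix t2 t\<close> consider "suffix t1 t2" | "suffix t2 t1"
    using suffix_same_cases by blast
  then show ?thesis
  proof cases
    case 1
    show ?thesis by (rule bisimulation_binder_suffix_eq_of_suffix[OF G R assms(5-9) assms(11-13) 1])
  next
    case 2
    from R(2) \<open>(r, s) \<in> R\<close> have "(s, r) \<in> R" by (rule symD)
    from bisimulation_binder_suffix_eq_of_suffix[OF G R this assms(7,6,9,8,13,10,11) 2]
    show ?thesis by (rule sym)
  qed
qed

lemma spread_least:
  assumes "propagated G R" and "Id_on (nodes G) \<subseteq> R" and "sym R" and "trans R" and "Q \<subseteq> R"
  shows "spread G Q \<subseteq> R"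
proof (rule subrelI)
  fix n m assume "(n, m) \<in> spread G Q"
  then show "(n, m) \<in> R"
  proof (induction rule: spread.induct)
    case (sp_refl n) then show ?case using assms(2) by blast
  next
    case (sp_sym n m) then show ?case using assms(3) by (blast dest: symD)
  next
    case (sp_trans n m k) then show ?case using assms(4) by (blast dest: transD)
  next
    case (sp_left n m n1 n2 m1 m2) then show ?case using assms(1) unfolding propagated_def by blast
  next
    case (sp_right n m n1 n2 m1 m2) then show ?case using assms(1) unfolding propagated_def by blast
  next
    case (sp_down n m n' m') then show ?case using assms(1) unfolding propagated_def by blast
  qed (use assms(5) in blast)
qed

lemma propagated_spread: "propagated G (spread G Q)"
  unfolding propagated_def by (blast intro: spread.sp_left spread.sp_right spread.sp_down)

lemma equiv_spread:
  assumes "spread G Q \<subseteq> nodes G \<times> nodes G"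
  shows "equiv (nodes G) (spread G Q)"
proof (rule equivI[OF assms])
  show "refl_on (nodes G) (spread G Q)"
    using assms by (auto simp: refl_on_def intro: spread.sp_refl)
  show "sym (spread G Q)" by (auto simp: sym_def intro: spread.sp_sym)
  show "trans (spread G Q)" by (auto simp: trans_def intro: spread.sp_trans)
qed

lemma propagated_rtrancl:
  assumes "homogeneous G S" and "propagated G S"
  shows "propagated G (S\<^sup>*)"
proof -
  have "(x1, y1) \<in> S\<^sup>* \<and> (x2, y2) \<in> S\<^sup>*"
    if "(x, y) \<in> S\<^sup>*" "lab G x = App x1 x2" "lab G y = App y1 y2" for x y x1 x2 y1 y2
    using that
  proof (induction arbitrary: y1 y2 rule: rtrancl_induct)
    case (step y z)
    obtain u1 u2 where "lab G y = App u1 u2"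
      using homogeneousD[OF assms(1) step.hyps(2)] step.prems(2) by (cases "lab G y") auto
    with step assms(2) show ?case
      unfolding propagated_def by (meson rtrancl.rtrancl_into_rtrancl)
  qed simp
  moreover have "(x', y') \<in> S\<^sup>*"
    if "(x, y) \<in> S\<^sup>*" "lab G x = Abs x'" "lab G y = Abs y'" for x y x' y'
    using that
  proof (induction arbitrary: y' rule: rtrancl_induct)
    case (step y z)
    obtain u where "lab G y = Abs u"
      using homogeneousD[OF assms(1) step.hyps(2)] step.prems(2) by (cases "lab G y") auto
    with step assms(2) show ?case
      unfolding propagated_def by (meson rtrancl.rtrancl_into_rtrancl)
  qed simp
  ultimately show ?thesis unfolding propagated_def by blast
qed

lemma propagated_Un_converse: "propagated G S \<Longrightarrow> propagated G (S \<union> S\<inverse>)"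
  unfolding propagated_def by blast

definition same_trace :: "('n, 'a) pregraph \<Rightarrow> ('n \<times> 'n) set \<Rightarrow> ('n \<times> 'n) set" where
  "same_trace G Q = {(n, m). \<exists>r s t. (r, s) \<in> Q \<and> path G r t n \<and> path G s t m}"

lemma propagated_same_trace: "propagated G (same_trace G Q)"
  unfolding propagated_def same_trace_def by (blast intro: path.path_abs path.path_appl path.path_appr)

lemma subset_same_trace: "Q \<subseteq> nodes G \<times> nodes G \<Longrightarrow> Q \<subseteq> same_trace G Q"
  unfolding same_trace_def by (blast intro: path.path_nil)

lemma same_trace_subset_spread: "same_trace G Q \<subseteq> spread G Q"
proof -
  have "(n, m) \<in> spread G Q" if "path G r t n" "(r, s) \<in> Q" "path G s t m" for r s t n m
    using that
  proof (induction arbitrary: m rule: path.induct)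
    case path_nil
    then show ?case using path_Nil_target spread.sp_base by metis
  next
    case (path_abs n \<tau> l n')
    from path_abs.prems(2) obtain l' where "path G s \<tau> l'" "lab G l' = Abs m"
      by cases auto
    with path_abs show ?case by (blast intro: spread.sp_down)
  next
    case (path_appl n \<tau> a n1 n2)
    from path_appl.prems(2) obtain a' m2 where "path G s \<tau> a'" "lab G a' = App m m2"
      by cases auto
    with path_appl show ?case by (blast intro: spread.sp_left)
  next
    case (path_appr n \<tau> a n1 n2)
    from path_appr.prems(2) obtain a' m1 where "path G s \<tau> a'" "lab G a' = App m1 m"
      by cases auto
    with path_appr show ?case by (blast intro: spread.sp_right)
  qed
  then show ?thesis unfolding same_trace_def by blast
qed

locale query_below_sharing_equivalence =
  fixes G :: "('n, 'a) pregraph" and Q R :: "('n \<times> 'n) set"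
  assumes G_lambda_graph: "lambda_graph G" and Q_query: "query G Q"
    and R_sharing: "sharing_equivalence G R" and Q_subset_R: "Q \<subseteq> R"
begin

lemma R_bisimulation: "bisimulation G R"
  and R_equiv: "equiv (nodes G) R"
  and R_open: "open_rel G R"
  using R_sharing unfolding sharing_equivalence_def by blast+

lemma spread_subset_R: "spread G Q \<subseteq> R"
proof (rule spread_least[OF _ _ _ _ Q_subset_R])
  show "propagated G R" using R_bisimulation unfolding bisimulation_def by blast
  show "Id_on (nodes G) \<subseteq> R" "sym R" "trans R"
    using R_equiv unfolding equiv_def refl_on_def by blast+
qed

lemma spread_subset_nodes: "spread G Q \<subseteq> nodes G \<times> nodes G"
  using spread_subset_R R_equiv unfolding equiv_def by blast

lemma same_trace_binders_in_spread:
  assumes "(n, m) \<in> same_trace G Q" and "lab G n = BVar l" and "lab G m = BVar l'"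
  shows "(l, l') \<in> spread G Q"
proof -
  obtain r s t where rs: "(r, s) \<in> Q" and n: "path G r t n" and m: "path G s t m"
    using assms(1) unfolding same_trace_def by blast
  have "is_root G r" "is_root G s" using Q_query rs unfolding query_def by blast+
  then obtain t1 t2 where t1: "suffix t1 t" "path G r t1 l" and t2: "suffix t2 t" "path G s t2 l'"
    using binder_on_root_path[OF G_lambda_graph] n m assms(2,3) by metis
  have "sym R" "trans R" using R_equiv unfolding equiv_def by blast+
  with rs Q_subset_R have "t1 = t2"
    using bisimulation_binder_suffix_eq[OF G_lambda_graph R_bisimulation _ _ _ n m assms(2,3) t1 t2]
    by blast
  with rs t1(2) t2(2) have "(l, l') \<in> same_trace G Q"
    unfolding same_trace_def by blast
  then show ?thesis using same_trace_subset_spread by blast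
qed

abbreviation same_trace_sym :: "('n \<times> 'n) set" where
  "same_trace_sym \<equiv> same_trace G Q \<union> (same_trace G Q)\<inverse>"

lemma homogeneous_same_trace_sym: "homogeneous G same_trace_sym"
proof (rule homogeneous_subset)
  show "homogeneous G R" using R_bisimulation unfolding bisimulation_def by blast
  have "sym R" using R_equiv unfolding equiv_def by blast
  then show "same_trace_sym \<subseteq> R"
    using same_trace_subset_spread spread_subset_R by (blast dest: symD)
qed

lemma spread_subset_same_trace_closure: "spread G Q \<subseteq> same_trace_sym\<^sup>*"
proof (rule spread_least)
  show "propagated G (same_trace_sym\<^sup>*)"
    using homogeneous_same_trace_sym propagated_Un_converse[OF propagated_same_trace]
    by (rule propagated_rtrancl)
  show "Id_on (nodes G) \<subseteq> same_trace_sym\<^sup>*" by blast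
  show "sym (same_trace_sym\<^sup>*)" by (rule sym_rtrancl[OF sym_Un_converse])
  show "trans (same_trace_sym\<^sup>*)" by (rule trans_rtrancl)
  show "Q \<subseteq> same_trace_sym\<^sup>*"
    using subset_same_trace[OF query_subset_nodes[OF Q_query]] by blast
qed

lemma closed_binders_spread: "closed_binders G (spread G Q)"
proof -
  have "(k, k') \<in> spread G Q"
    if "(x, y) \<in> same_trace_sym\<^sup>*" "x \<in> nodes G" "lab G x = BVar k" "lab G y = BVar k'"
    for x y k k'
    using that
  proof (induction arbitrary: k' rule: rtrancl_induct)
    case base
    then have "k' \<in> nodes G" using binder_node[OF lambda_graph_pre[OF G_lambda_graph]] by simp
    with base show ?case by (auto intro: spread.sp_refl)
  next
    case (step y z)
    obtain u where u: "lab G y = BVar u"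
      using homogeneousD[OF homogeneous_same_trace_sym step.hyps(2)] step.prems(3)
      by (cases "lab G y") auto
    from step.hyps(2) have "(u, k') \<in> spread G Q"
      using same_trace_binders_in_spread u step.prems(3) by (blast intro: spread.sp_sym)
    with step.IH[OF step.prems(1,2) u] show ?case by (rule spread.sp_trans)
  qed
  then show ?thesis
    unfolding closed_binders_def using spread_subset_same_trace_closure spread_subset_nodes by blast
qed

lemma sharing_equivalence_spread: "sharing_equivalence G (spread G Q)"
proof -
  have "homogeneous G (spread G Q)"
    using spread_subset_R R_bisimulation homogeneous_subset unfolding bisimulation_def by blast
  moreover have "open_rel G (spread G Q)"
    using spread_subset_R R_open by (rule open_rel_subset)
  ultimately show ?thesis
    unfolding sharing_equivalence_def bisimulation_def
    using propagated_spread closed_binders_spread equiv_spread[OF spread_subset_nodes] by blast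
qed

end

theorem mainTheorem16:
  fixes G :: "('n, 'a) pregraph" and Q :: "('n \<times> 'n) set"
  assumes "lambda_graph G" and "query G Q"
  shows "sharing_equivalence G (spread G Q) \<longleftrightarrow>
         (\<exists>R. sharing_equivalence G R \<and> Q \<subseteq> R)"
proof
  assume "sharing_equivalence G (spread G Q)"
  moreover have "Q \<subseteq> spread G Q" by (auto intro: spread.sp_base)
  ultimately show "\<exists>R. sharing_equivalence G R \<and> Q \<subseteq> R" by blast
next
  assume "\<exists>R. sharing_equivalence G R \<and> Q \<subseteq> R"
  then obtain R where "sharing_equivalence G R" and "Q \<subseteq> R" by blast
  with assms interpret query_below_sharing_equivalence G Q R by unfold_locales
  show "sharing_equivalence G (spread G Q)" by (rule sharing_equivalence_spread)
qed

end
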